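(* Let $\alpha=\frac{8}{97}(11-2\sqrt6)$. The function $$x\mapsto \frac{E(x)^2-(1-x)K(x)^2}{x^2K(x)}$$ is strictly increasing on $(0,\alpha)$, and for all $x\in(0,\alpha)$, $$E(x)^2-(1-x)K(x)^2\ge \frac{\pi}{16}\,x^2K(x).$$
   Context: $K(x)={\cal K}(\sqrt x)$ and $E(x)={\cal E}(\sqrt x)$ for $x\in[0,1)$, where ${\cal K}(r)=\int_0^{\pi/2}(1-r^2\sin^2t)^{-1/2}dt$ and ${\cal E}(r)=\int_0^{\pi/2}(1-r^2\sin^2t)^{1/2}dt$ are the complete elliptic integrals of the first and second kind. *)

theory Defs
  imports "HOL-Analysis.Analysis"
begin

text \<open>Complete elliptic integrals in the parameter convention of the paper:
  K(x) = cal K(sqrt x), E(x) = cal E(sqrt x), for x in [0,1).\<close>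

definition ellK :: "real \<Rightarrow> real" where
  "ellK x = integral {0..pi/2} (\<lambda>t. 1 / sqrt (1 - x * (sin t)\<^sup>2))"

definition ellE :: "real \<Rightarrow> real" where
  "ellE x = integral {0..pi/2} (\<lambda>t. sqrt (1 - x * (sin t)\<^sup>2))"

end

theory Submission
  imports Defs
begin

text \<open>Differentiating under the integral sign, and integrating by parts, gives the classical
  formulas K' = (E - (1-x)K) / (2x(1-x)) and E' = (E - K) / (2x). Hence the numerator
  E^2 - (1-x)K^2 has derivative (E - K)^2/x, and the derivative of the quotient has the sign
  of the cubic 3(1-x)^2 + 2(1-x) - 3(1-x)t - (1-x)t^2 - t^3 at t = E/K. This cubic decreases in
  t > 0, and E/K satisfies a Riccati equation; comparing it with the rational function
  h(x) = (16 - 16x + 3x^2) / (8(2-x)) via an integrating factor gives E/K < h, while the cubic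
  at t = h is x^3(256 - 640x + 456x^2 - 99x^3) / (512(2-x)^3) > 0 for x < 3/5. So the quotient
  increases on (0, 3/5), which contains (0, \<alpha>). Finally K - E \<ge> \<pi>x/4 makes the numerator at
  least \<pi>^2x^2/32, so the quotient is bounded below by its limit \<pi>/16 at 0.\<close>

lemma mult_sin_square_less_one:
  fixes x t :: real
  assumes "x < 1"
  shows "x * (sin t)^2 < 1"
proof -
  have "x * (sin t)^2 \<le> max x 0"
    by (cases "x \<ge> 0") (auto simp: mult_left_le mult_nonpos_nonneg abs_square_le_1)
  with assms show ?thesis by linarith
qed

lemmas mult_sin_square_neq_one = mult_sin_square_less_one[THEN less_imp_neq]

lemma ellK_has_integral:
  assumes "x < 1"
  shows "((\<lambda>t. 1 / sqrt (1 - x * (sin t)^2)) has_integral ellK x) {0..pi/2}"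
  unfolding ellK_def using assms
  by (intro integrable_integral integrable_continuous_interval)
     (auto intro!: continuous_intros simp: mult_sin_square_less_one mult_sin_square_neq_one)

lemma ellE_has_integral:
  "((\<lambda>t. sqrt (1 - x * (sin t)^2)) has_integral ellE x) {0..pi/2}"
  unfolding ellE_def
  by (intro integrable_integral integrable_continuous_interval) (auto intro!: continuous_intros)

lemma ellK_has_derivative_integral:
  assumes "x < 1"
  shows "(ellK has_real_derivative
           integral {0..pi/2} (\<lambda>t. (sin t)^2 / (2 * (1 - x * (sin t)^2) * sqrt (1 - x * (sin t)^2))))
         (at x)"
proof -
  have "((\<lambda>x. integral (cbox 0 (pi/2)) (\<lambda>t. 1 / sqrt (1 - x * (sin t)^2))) has_field_derivative
          integral (cbox 0 (pi/2)) (\<lambda>t. (sin t)^2 / (2 * (1 - x * (sin t)^2) * sqrt (1 - x * (sin t)^2))))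
        (at x within {..<1})"
  proof (rule leibniz_rule_field_derivative)
    fix y t :: real assume "y \<in> {..<1}"
    then have "0 < 1 - y * (sin t)^2" by (simp add: mult_sin_square_less_one)
    then show "((\<lambda>y. 1 / sqrt (1 - y * (sin t)^2)) has_field_derivative
                 (sin t)^2 / (2 * (1 - y * (sin t)^2) * sqrt (1 - y * (sin t)^2))) (at y within {..<1})"
      by (auto intro!: derivative_eq_intros simp: field_simps power2_eq_square)
  next
    show "continuous_on ({..<1} \<times> cbox 0 (pi/2))
            (\<lambda>(y, t). (sin t)^2 / (2 * (1 - y * (sin t)^2) * sqrt (1 - y * (sin t)^2)))"
      unfolding split_beta by (intro continuous_intros) (auto simp: mult_sin_square_neq_one)
  next
    fix y :: real assume "y \<in> {..<1}"
    then show "(\<lambda>t. 1 / sqrt (1 - y * (sin t)^2)) integrable_on cbox 0 (pi/2)"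
      using ellK_has_integral by auto
  qed (simp_all add: assms)
  then show ?thesis
    unfolding ellK_def using assms by (simp add: at_within_open[of x "{..<1}"])
qed

lemma ellE_has_derivative_integral:
  assumes "x < 1"
  shows "(ellE has_real_derivative
           integral {0..pi/2} (\<lambda>t. - ((sin t)^2) / (2 * sqrt (1 - x * (sin t)^2)))) (at x)"
proof -
  have "((\<lambda>x. integral (cbox 0 (pi/2)) (\<lambda>t. sqrt (1 - x * (sin t)^2))) has_field_derivative
          integral (cbox 0 (pi/2)) (\<lambda>t. - ((sin t)^2) / (2 * sqrt (1 - x * (sin t)^2))))
        (at x within {..<1})"
  proof (rule leibniz_rule_field_derivative)
    fix y t :: real assume "y \<in> {..<1}"
    then have "0 < 1 - y * (sin t)^2" by (simp add: mult_sin_square_less_one)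
    then show "((\<lambda>y. sqrt (1 - y * (sin t)^2)) has_field_derivative
                 - ((sin t)^2) / (2 * sqrt (1 - y * (sin t)^2))) (at y within {..<1})"
      by (auto intro!: derivative_eq_intros simp: field_simps)
  next
    show "continuous_on ({..<1} \<times> cbox 0 (pi/2)) (\<lambda>(y, t). - ((sin t)^2) / (2 * sqrt (1 - y * (sin t)^2)))"
      unfolding split_beta by (intro continuous_intros) (auto simp: mult_sin_square_neq_one)
  qed (use ellE_has_integral assms in auto)
  then show ?thesis
    unfolding ellE_def using assms by (simp add: at_within_open[of x "{..<1}"])
qed

text \<open>The boundary term vanishes at 0 and \<pi>/2; integrating its derivative is the integration by
  parts behind the formula for K'.\<close>

lemma ell_boundary_term_has_derivative:
  fixes x t :: real
  assumes "x < 1"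
  defines "r \<equiv> sqrt (1 - x * (sin t)^2)"
  shows "((\<lambda>t. x * sin t * cos t / sqrt (1 - x * (sin t)^2)) has_real_derivative
           r - (1 - x) * (1 / r) - 2 * x * (1 - x) * ((sin t)^2 / (2 * (1 - x * (sin t)^2) * r)))
         (at t within S)"
proof -
  have "0 < 1 - x * (sin t)^2" using assms by (simp add: mult_sin_square_less_one)
  then have r: "0 < r" "r * r = 1 - x * (sin t)^2" by (auto simp: r_def)
  have c: "cos t * cos t = 1 - (sin t)^2"
    using sin_cos_squared_add[of t] unfolding power2_eq_square by linarith
  have dr: "((\<lambda>t. sqrt (1 - x * (sin t)^2)) has_real_derivative - x * sin t * cos t / r) (at t within S)"
    using r unfolding r_def by (auto intro!: derivative_eq_intros simp: field_simps)
  have dn: "((\<lambda>t. x * sin t * cos t) has_real_derivative x * (cos t * cos t - sin t * sin t)) (at t within S)"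
    by (auto intro!: derivative_eq_intros simp: algebra_simps)
  have "(x * (cos t * cos t - sin t * sin t) * r - x * sin t * cos t * (- x * sin t * cos t / r)) / (r * r)
      = (x * (cos t * cos t - sin t * sin t) * (r * r) + x^2 * (sin t)^2 * (cos t * cos t)) / (r * r * r)"
    using r(1) by (simp add: field_simps power2_eq_square)
  also have "\<dots> = ((r * r) * (r * r) - (1 - x) * (r * r) - x * (1 - x) * (sin t)^2) / (r * r * r)"
    unfolding c r(2) by (simp add: algebra_simps power2_eq_square)
  also have "\<dots> = r - (1 - x) * (1 / r) - 2 * x * (1 - x) * ((sin t)^2 / (2 * (1 - x * (sin t)^2) * r))"
    unfolding r(2)[symmetric] using r(1) by (simp add: field_simps)
  finally show ?thesis
    using DERIV_divide[OF dn dr] r(1) unfolding r_def by simp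
qed

lemma ellK_derivative_integral_eq:
  assumes "x < 1"
  shows "2 * x * (1 - x) *
           integral {0..pi/2} (\<lambda>t. (sin t)^2 / (2 * (1 - x * (sin t)^2) * sqrt (1 - x * (sin t)^2)))
         = ellE x - (1 - x) * ellK x"
proof -
  define g where "g t = (sin t)^2 / (2 * (1 - x * (sin t)^2) * sqrt (1 - x * (sin t)^2))" for t
  define \<psi> where "\<psi> t = x * sin t * cos t / sqrt (1 - x * (sin t)^2)" for t
  have "g integrable_on {0..pi/2}"
    unfolding g_def using assms
    by (intro integrable_continuous_interval continuous_intros) (auto simp: mult_sin_square_neq_one)
  then have lhs: "((\<lambda>t. sqrt (1 - x * (sin t)^2) - (1 - x) * (1 / sqrt (1 - x * (sin t)^2)) - 2 * x * (1 - x) * g t)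
          has_integral (ellE x - (1 - x) * ellK x - 2 * x * (1 - x) * integral {0..pi/2} g)) {0..pi/2}"
    using assms
    by (intro has_integral_diff has_integral_mult_right ellE_has_integral ellK_has_integral integrable_integral)
  have "((\<lambda>t. sqrt (1 - x * (sin t)^2) - (1 - x) * (1 / sqrt (1 - x * (sin t)^2)) - 2 * x * (1 - x) * g t)
          has_integral (\<psi> (pi/2) - \<psi> 0)) {0..pi/2}"
    unfolding g_def \<psi>_def
    by (rule fundamental_theorem_of_calculus, simp)
       (unfold has_real_derivative_iff_has_vector_derivative[symmetric],
        rule ell_boundary_term_has_derivative[OF assms])
  moreover have "\<psi> (pi/2) - \<psi> 0 = 0" by (simp add: \<psi>_def)
  ultimately have "ellE x - (1 - x) * ellK x - 2 * x * (1 - x) * integral {0..pi/2} g = 0"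
    using has_integral_unique[OF lhs] by simp
  then show ?thesis unfolding g_def by simp
qed

lemma ellE_derivative_integral_eq:
  assumes "x < 1"
  shows "2 * x * integral {0..pi/2} (\<lambda>t. - ((sin t)^2) / (2 * sqrt (1 - x * (sin t)^2)))
         = ellE x - ellK x"
proof -
  have "2 * x * integral {0..pi/2} (\<lambda>t. - ((sin t)^2) / (2 * sqrt (1 - x * (sin t)^2)))
        = integral {0..pi/2} (\<lambda>t. 2 * x * (- ((sin t)^2) / (2 * sqrt (1 - x * (sin t)^2))))"
    by (simp only: integral_mult_right)
  also have "\<dots> = integral {0..pi/2} (\<lambda>t. sqrt (1 - x * (sin t)^2) - 1 / sqrt (1 - x * (sin t)^2))"
  proof (rule integral_cong)
    fix t :: real
    have "0 < 1 - x * (sin t)^2" using assms by (simp add: mult_sin_square_less_one)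
    then show "2 * x * (- ((sin t)^2) / (2 * sqrt (1 - x * (sin t)^2)))
               = sqrt (1 - x * (sin t)^2) - 1 / sqrt (1 - x * (sin t)^2)"
      by (simp add: field_simps)
  qed
  also have "\<dots> = ellE x - ellK x"
    using assms by (intro integral_unique has_integral_diff ellE_has_integral ellK_has_integral)
  finally show ?thesis .
qed

lemma ellK_has_real_derivative:
  assumes "x < 1" "x \<noteq> 0"
  shows "(ellK has_real_derivative (ellE x - (1 - x) * ellK x) / (2 * x * (1 - x))) (at x)"
proof -
  have "(ellE x - (1 - x) * ellK x) / (2 * x * (1 - x))
        = integral {0..pi/2} (\<lambda>t. (sin t)^2 / (2 * (1 - x * (sin t)^2) * sqrt (1 - x * (sin t)^2)))"
    using ellK_derivative_integral_eq[OF assms(1)] assms by (simp add: field_simps)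
  with ellK_has_derivative_integral[OF assms(1)] show ?thesis by simp
qed

lemma ellE_has_real_derivative:
  assumes "x < 1" "x \<noteq> 0"
  shows "(ellE has_real_derivative (ellE x - ellK x) / (2 * x)) (at x)"
proof -
  have "(ellE x - ellK x) / (2 * x)
        = integral {0..pi/2} (\<lambda>t. - ((sin t)^2) / (2 * sqrt (1 - x * (sin t)^2)))"
    using ellE_derivative_integral_eq[OF assms(1)] assms by (simp add: field_simps)
  with ellE_has_derivative_integral[OF assms(1)] show ?thesis by simp
qed

lemma ellK_0: "ellK 0 = pi/2"
  by (simp add: ellK_def)

lemma ellE_0: "ellE 0 = pi/2"
  by (simp add: ellE_def)

lemma isCont_ellK: "x < 1 \<Longrightarrow> isCont ellK x"
  using ellK_has_derivative_integral DERIV_isCont by blast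

lemma isCont_ellE: "x < 1 \<Longrightarrow> isCont ellE x"
  using ellE_has_derivative_integral DERIV_isCont by blast

lemma ellK_ge_pi_half:
  assumes "0 \<le> x" "x < 1"
  shows "pi/2 \<le> ellK x"
proof -
  have "integral {0..pi/2} (\<lambda>t. 1 :: real) \<le> ellK x"
  proof (rule has_integral_le[OF integrable_integral ellK_has_integral[OF assms(2)]])
    fix t :: real
    have "0 < 1 - x * (sin t)^2" using assms(2) by (simp add: mult_sin_square_less_one)
    moreover have "1 - x * (sin t)^2 \<le> 1" using assms(1) by simp
    ultimately show "1 \<le> 1 / sqrt (1 - x * (sin t)^2)" by (simp add: field_simps)
  qed auto
  then show ?thesis by simp
qed

lemma ellK_pos: "0 \<le> x \<Longrightarrow> x < 1 \<Longrightarrow> 0 < ellK x"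
  using ellK_ge_pi_half[of x] pi_gt_zero by linarith

lemma ellE_pos:
  assumes "0 \<le> x" "x < 1"
  shows "0 < ellE x"
proof -
  have "integral {0..pi/2} (\<lambda>t. sqrt (1 - x)) \<le> ellE x"
  proof (rule has_integral_le[OF integrable_integral ellE_has_integral])
    fix t :: real
    have "x * (sin t)^2 \<le> x" using assms(1) by (simp add: mult_left_le abs_square_le_1)
    then show "sqrt (1 - x) \<le> sqrt (1 - x * (sin t)^2)" by simp
  qed auto
  moreover have "0 < integral {0..pi/2} (\<lambda>t. sqrt (1 - x))" using assms(2) by simp
  ultimately show ?thesis by linarith
qed

lemma sin_square_has_integral: "((\<lambda>t. (sin t)^2) has_integral pi/4) {0..pi/2}"
proof -
  have "((\<lambda>t. (sin t)^2) has_integral (pi/2/2 - sin (pi/2) * cos (pi/2) / 2) - (0/2 - sin 0 * cos 0 / 2))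
          {0..pi/2}"
  proof (rule fundamental_theorem_of_calculus)
    fix t :: real
    have "((\<lambda>t. t/2 - sin t * cos t / 2) has_real_derivative
            1/2 - (cos t * cos t - sin t * sin t) / 2) (at t within {0..pi/2})"
      by (auto intro!: derivative_eq_intros)
    moreover have "1/2 - (cos t * cos t - sin t * sin t) / 2 = (sin t)^2"
      by (simp add: power2_eq_square[symmetric] cos_squared_eq field_simps)
    ultimately show "((\<lambda>t. t/2 - sin t * cos t / 2) has_vector_derivative (sin t)^2) (at t within {0..pi/2})"
      by (simp add: has_real_derivative_iff_has_vector_derivative)
  qed simp
  then show ?thesis by simp
qed

lemma ellK_minus_ellE_ge:
  assumes "0 \<le> x" "x < 1"
  shows "pi/4 * x \<le> ellK x - ellE x"
proof -
  have "x * (pi/4) \<le> ellK x - ellE x"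
  proof (rule has_integral_le[OF has_integral_mult_right[OF sin_square_has_integral]
                                 has_integral_diff[OF ellK_has_integral[OF assms(2)] ellE_has_integral]])
    fix t :: real
    define r where "r = sqrt (1 - x * (sin t)^2)"
    have "0 < 1 - x * (sin t)^2" using assms(2) by (simp add: mult_sin_square_less_one)
    then have r: "0 < r" "r \<le> 1" "r * r = 1 - x * (sin t)^2" using assms(1) by (auto simp: r_def)
    have "1 / r - r = x * (sin t)^2 / r" using r by (simp add: field_simps)
    also have "x * (sin t)^2 \<le> \<dots>" using r assms(1) by (simp add: le_divide_eq mult_left_le)
    finally show "x * (sin t)^2 \<le> 1 / sqrt (1 - x * (sin t)^2) - sqrt (1 - x * (sin t)^2)"
      by (simp add: r_def)
  qed
  then show ?thesis by (simp add: mult.commute)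
qed

lemma pos_of_deriv_gt_linear:
  fixes u d u' d' :: "real \<Rightarrow> real"
  assumes "a < b" "u a = 0"
    and "continuous_on {a..b} u" "continuous_on {a..b} d"
    and "\<And>y. a < y \<Longrightarrow> y < b \<Longrightarrow> (u has_real_derivative u' y) (at y)"
    and "\<And>y. a < y \<Longrightarrow> y < b \<Longrightarrow> (d has_real_derivative d' y) (at y)"
    and "\<And>y. a < y \<Longrightarrow> y < b \<Longrightarrow> d' y * u y < u' y"
  shows "0 < u b"
proof -
  define w where "w y = u y * exp (- d y)" for y
  have "w a < w b"
  proof (rule DERIV_pos_imp_increasing_open[OF assms(1)])
    fix y assume y: "a < y" "y < b"
    have "(w has_real_derivative exp (- d y) * (u' y - d' y * u y)) (at y)"
      unfolding w_def using assms(5,6)[OF y]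
      by (auto intro!: derivative_eq_intros simp: algebra_simps)
    moreover have "0 < exp (- d y) * (u' y - d' y * u y)" using assms(7)[OF y] by simp
    ultimately show "\<exists>l. (w has_real_derivative l) (at y) \<and> 0 < l" by blast
  next
    show "continuous_on {a..b} w"
      unfolding w_def using assms(3,4) by (intro continuous_intros)
  qed
  then show ?thesis by (simp add: w_def assms(2) zero_less_mult_iff)
qed

lemma ellE_div_ellK_has_real_derivative:
  assumes "0 < x" "x < 1"
  defines "t \<equiv> ellE x / ellK x"
  shows "((\<lambda>y. ellE y / ellK y) has_real_derivative ((2 * t - 1) * (1 - x) - t^2) / (2 * x * (1 - x))) (at x)"
proof -
  have K: "0 < ellK x" using assms by (simp add: ellK_pos)
  have "((\<lambda>y. ellE y / ellK y) has_real_derivative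
          ((ellE x - ellK x) / (2 * x) * ellK x - ellE x * ((ellE x - (1 - x) * ellK x) / (2 * x * (1 - x))))
          / (ellK x * ellK x)) (at x)"
    using assms K by (intro DERIV_divide ellE_has_real_derivative ellK_has_real_derivative) auto
  moreover have "((ellE x - ellK x) / (2 * x) * ellK x - ellE x * ((ellE x - (1 - x) * ellK x) / (2 * x * (1 - x))))
          / (ellK x * ellK x) = ((2 * t - 1) * (1 - x) - t^2) / (2 * x * (1 - x))"
    unfolding t_def using assms K by (simp add: field_simps power2_eq_square)
  ultimately show ?thesis by simp
qed

text \<open>This rational function agrees with E/K to second order at 0, and its Riccati defect is the nonnegative
  term 9x^4/(64(2-x)^2) of the next lemma.\<close>

definition ell_ratio_bound :: "real \<Rightarrow> real" where
  "ell_ratio_bound x = (16 - 16 * x + 3 * x^2) / (8 * (2 - x))"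

lemma ell_ratio_bound_has_real_derivative:
  assumes "x \<noteq> 2"
  shows "(ell_ratio_bound has_real_derivative - 3/8 - 1 / (2 * (2 - x)^2)) (at x)"
proof -
  have "(ell_ratio_bound has_real_derivative
          ((- 16 + 6 * x) * (8 * (2 - x)) - (16 - 16 * x + 3 * x^2) * (- 8)) / ((8 * (2 - x)) * (8 * (2 - x))))
        (at x)"
    unfolding ell_ratio_bound_def[abs_def] using assms
    by (intro DERIV_divide derivative_eq_intros) auto
  moreover have "((- 16 + 6 * x) * (8 * (2 - x)) - (16 - 16 * x + 3 * x^2) * (- 8)) / ((8 * (2 - x)) * (8 * (2 - x)))
                 = - 3/8 - 1 / (2 * (2 - x)^2)"
  proof -
    define p where "p = 2 - x"
    have "p \<noteq> 0" using assms by (simp add: p_def)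
    then show ?thesis
      unfolding p_def[symmetric] by (simp add: field_simps power2_eq_square) (simp add: p_def algebra_simps)
  qed
  ultimately show ?thesis by simp
qed

lemma ell_ratio_bound_riccati_defect:
  fixes x t :: real
  assumes "0 < x" "x < 1"
  defines "u \<equiv> ell_ratio_bound x - t"
  shows "(- 3/8 - 1 / (2 * (2 - x)^2)) - ((2 * t - 1) * (1 - x) - t^2) / (2 * x * (1 - x))
         - (- (3 / (1 - x) + 2 / (2 - x)) / 8) * u
         = (9 * x^4 / (64 * (2 - x)^2) + u^2) / (2 * x * (1 - x))"
proof -
  define p q where "p = 2 - x" and "q = 1 - x"
  have "p \<noteq> 0" "q \<noteq> 0" "x \<noteq> 0" using assms by (auto simp: p_def q_def)
  then show ?thesis
    unfolding u_def ell_ratio_bound_def p_def[symmetric] q_def[symmetric]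
    by (simp add: field_simps power2_eq_square power4_eq_xxxx) (simp add: p_def q_def algebra_simps)
qed

lemma ellE_div_ellK_less_ell_ratio_bound:
  assumes "0 < x" "x < 1"
  shows "ellE x / ellK x < ell_ratio_bound x"
proof -
  define u where "u y = ell_ratio_bound y - ellE y / ellK y" for y
  define u' where "u' y = (- 3/8 - 1 / (2 * (2 - y)^2))
                          - ((2 * (ellE y / ellK y) - 1) * (1 - y) - (ellE y / ellK y)^2) / (2 * y * (1 - y))"
    for y
  \<comment> \<open>d' is the coefficient of the Riccati equation for E/K linearised at the bound\<close>
  define d :: "real \<Rightarrow> real" where "d y = (3 * ln (1 - y) + 2 * ln (2 - y)) / 8" for y
  define d' :: "real \<Rightarrow> real" where "d' y = - (3 / (1 - y) + 2 / (2 - y)) / 8" for y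
  have K: "ellK y \<noteq> 0" if "0 \<le> y" "y < 1" for y
    using ellK_pos[OF that] by simp
  have "0 < u x"
  proof (rule pos_of_deriv_gt_linear[OF assms(1)])
    show "u 0 = 0" by (simp add: u_def ell_ratio_bound_def ellE_0 ellK_0)
    show "continuous_on {0..x} u"
      unfolding u_def using assms K
      by (intro continuous_at_imp_continuous_on ballI continuous_intros isCont_ellE isCont_ellK
            DERIV_isCont[OF ell_ratio_bound_has_real_derivative]) auto
    show "continuous_on {0..x} d"
      unfolding d_def using assms by (intro continuous_intros) auto
  next
    fix y assume y: "0 < y" "y < x"
    then have y1: "y < 1" using assms by simp
    show "(u has_real_derivative u' y) (at y)"
      unfolding u_def[abs_def] u'_def using y y1
      by (intro DERIV_diff ell_ratio_bound_has_real_derivative ellE_div_ellK_has_real_derivative) auto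
    have "((\<lambda>y. ln (1 - y)) has_real_derivative - 1 / (1 - y)) (at y)"
         "((\<lambda>y. ln (2 - y)) has_real_derivative - 1 / (2 - y)) (at y)"
      using y1 by (auto intro!: derivative_eq_intros simp: divide_inverse)
    then have "(d has_real_derivative (3 * (- 1 / (1 - y)) + 2 * (- 1 / (2 - y))) / 8) (at y)"
      unfolding d_def[abs_def] by (intro DERIV_cdivide DERIV_add DERIV_cmult)
    then show "(d has_real_derivative d' y) (at y)"
      unfolding d'_def by simp
    have "u' y - d' y * u y = (9 * y^4 / (64 * (2 - y)^2) + (u y)^2) / (2 * y * (1 - y))"
      unfolding u'_def d'_def u_def by (rule ell_ratio_bound_riccati_defect[OF y(1) y1])
    also have "\<dots> > 0" using y y1 by (intro divide_pos_pos add_pos_nonneg) auto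
    finally show "d' y * u y < u' y" by simp
  qed
  then show ?thesis by (simp add: u_def)
qed

definition ell_sign_cubic :: "real \<Rightarrow> real \<Rightarrow> real" where
  "ell_sign_cubic x t = 3 * (1 - x)^2 + 2 * (1 - x) - 3 * (1 - x) * t - (1 - x) * t^2 - t^3"

lemma ell_sign_cubic_at_ell_ratio_bound:
  assumes "x \<noteq> 2"
  shows "ell_sign_cubic x (ell_ratio_bound x)
         = x^3 * (256 - 640 * x + 456 * x^2 - 99 * x^3) / (512 * (2 - x)^3)"
proof -
  define p where "p = 2 - x"
  have "p \<noteq> 0" using assms by (simp add: p_def)
  then show ?thesis
    unfolding ell_sign_cubic_def ell_ratio_bound_def p_def[symmetric]
    by (simp add: field_simps power2_eq_square power3_eq_cube) (simp add: p_def algebra_simps)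
qed

lemma cubic_pos_below_three_fifths:
  fixes x :: real
  assumes "0 < x" "x < 3/5"
  shows "0 < 256 - 640 * x + 456 * x^2 - 99 * x^3"
proof -
  have "x^3 \<le> 3/5 * x^2"
    using assms by (simp add: power3_eq_cube power2_eq_square mult_right_mono)
  moreover have "(1/5)^2 \<le> (80/99 - x)^2"
    using assms by (intro power_mono) auto
  then have "1/25 + 160/99 * x - 6400/9801 \<le> x^2"
    by (simp add: power2_eq_square algebra_simps)
  ultimately show ?thesis using assms by linarith
qed

lemma ell_sign_cubic_pos:
  assumes "0 < x" "x < 3/5" "0 < t" "t < ell_ratio_bound x"
  shows "0 < ell_sign_cubic x t"
proof -
  define h where "h = ell_ratio_bound x"
  have "0 < ell_sign_cubic x h"
    unfolding h_def using assms cubic_pos_below_three_fifths[OF assms(1,2)]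
    by (simp add: ell_sign_cubic_at_ell_ratio_bound)
  moreover have "ell_sign_cubic x t - ell_sign_cubic x h
                 = (h - t) * (3 * (1 - x) + (1 - x) * (h + t) + h^2 + h * t + t^2)"
    by (simp add: ell_sign_cubic_def algebra_simps power2_eq_square power3_eq_cube)
  moreover have "0 < (h - t) * (3 * (1 - x) + (1 - x) * (h + t) + h^2 + h * t + t^2)"
    using assms by (intro mult_pos_pos add_pos_nonneg) (auto simp: h_def)
  ultimately show ?thesis by linarith
qed

lemma ell_numerator_has_real_derivative:
  assumes "x < 1" "x \<noteq> 0"
  shows "((\<lambda>y. (ellE y)^2 - (1 - y) * (ellK y)^2) has_real_derivative (ellE x - ellK x)^2 / x) (at x)"
proof -
  define E' K' where "E' = (ellE x - ellK x) / (2 * x)"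
    and "K' = (ellE x - (1 - x) * ellK x) / (2 * x * (1 - x))"
  have "((\<lambda>y. (ellE y)^2 - (1 - y) * (ellK y)^2) has_real_derivative
          2 * ellE x * E' - (- ((ellK x)^2) + (1 - x) * (2 * ellK x * K'))) (at x)"
    using ellE_has_real_derivative[OF assms] ellK_has_real_derivative[OF assms]
    unfolding E'_def[symmetric] K'_def[symmetric]
    by (auto intro!: derivative_eq_intros)
  moreover have "2 * ellE x * E' - (- ((ellK x)^2) + (1 - x) * (2 * ellK x * K')) = (ellE x - ellK x)^2 / x"
  proof -
    define q where "q = 1 - x"
    have "q \<noteq> 0" using assms by (simp add: q_def)
    then show ?thesis
      using assms unfolding E'_def K'_def q_def[symmetric]
      by (simp add: field_simps power2_eq_square) (simp add: q_def algebra_simps)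
  qed
  ultimately show ?thesis by simp
qed

lemma ell_quotient_has_real_derivative:
  assumes "0 < x" "x < 1"
  shows "((\<lambda>y. ((ellE y)^2 - (1 - y) * (ellK y)^2) / (y^2 * ellK y)) has_real_derivative
           ellK x * ell_sign_cubic x (ellE x / ellK x) / (2 * x^3 * (1 - x))) (at x)"
proof -
  define K' where "K' = (ellE x - (1 - x) * ellK x) / (2 * x * (1 - x))"
  have K: "0 < ellK x" using assms by (simp add: ellK_pos)
  have "((\<lambda>y. y^2 * ellK y) has_real_derivative 2 * x * ellK x + x^2 * K') (at x)"
    using ellK_has_real_derivative[of x] assms unfolding K'_def[symmetric]
    by (auto intro!: derivative_eq_intros)
  from DERIV_divide[OF ell_numerator_has_real_derivative this] assms K
  have "((\<lambda>y. ((ellE y)^2 - (1 - y) * (ellK y)^2) / (y^2 * ellK y)) has_real_derivative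
          ((ellE x - ellK x)^2 / x * (x^2 * ellK x)
           - ((ellE x)^2 - (1 - x) * (ellK x)^2) * (2 * x * ellK x + x^2 * K'))
          / ((x^2 * ellK x) * (x^2 * ellK x))) (at x)"
    by simp
  moreover have "((ellE x - ellK x)^2 / x * (x^2 * ellK x)
           - ((ellE x)^2 - (1 - x) * (ellK x)^2) * (2 * x * ellK x + x^2 * K'))
          / ((x^2 * ellK x) * (x^2 * ellK x))
        = ellK x * ell_sign_cubic x (ellE x / ellK x) / (2 * x^3 * (1 - x))"
  proof -
    define q where "q = 1 - x"
    have "q \<noteq> 0" using assms by (simp add: q_def)
    then show ?thesis
      using assms K unfolding ell_sign_cubic_def K'_def q_def[symmetric]
      by (simp add: field_simps power2_eq_square power3_eq_cube)
  qed
  ultimately show ?thesis by simp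
qed

lemma strict_mono_on_ell_quotient:
  "strict_mono_on {0<..<3/5} (\<lambda>x. ((ellE x)^2 - (1 - x) * (ellK x)^2) / (x^2 * ellK x))"
proof (rule strict_mono_onI)
  fix a b :: real
  assume ab: "a \<in> {0<..<3/5}" "b \<in> {0<..<3/5}" "a < b"
  have "\<exists>l. ((\<lambda>y. ((ellE y)^2 - (1 - y) * (ellK y)^2) / (y^2 * ellK y)) has_real_derivative l) (at x)
             \<and> 0 < l" if "a \<le> x" "x \<le> b" for x
  proof -
    have x: "0 < x" "x < 3/5" using ab that by auto
    have K: "0 < ellK x" and E: "0 < ellE x" using x by (simp_all add: ellK_pos ellE_pos)
    have "0 < ell_sign_cubic x (ellE x / ellK x)"
      using x K E ellE_div_ellK_less_ell_ratio_bound[of x] by (intro ell_sign_cubic_pos) auto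
    then have "0 < ellK x * ell_sign_cubic x (ellE x / ellK x) / (2 * x^3 * (1 - x))"
      using x K by simp
    with ell_quotient_has_real_derivative[of x] x show ?thesis by auto
  qed
  then show "((ellE a)^2 - (1 - a) * (ellK a)^2) / (a^2 * ellK a)
             < ((ellE b)^2 - (1 - b) * (ellK b)^2) / (b^2 * ellK b)"
    by (rule DERIV_pos_imp_increasing[OF ab(3)])
qed

lemma ell_numerator_ge:
  assumes "0 \<le> x" "x < 1"
  shows "pi^2 / 32 * x^2 \<le> (ellE x)^2 - (1 - x) * (ellK x)^2"
proof -
  define M where "M y = (ellE y)^2 - (1 - y) * (ellK y)^2 - pi^2 / 32 * y^2" for y
  have "M 0 \<le> M x"
  proof (rule DERIV_nonneg_imp_increasing_open[OF assms(1)])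
    fix y assume y: "0 < y" "y < x"
    then have y1: "y < 1" using assms by simp
    have "(M has_real_derivative (ellE y - ellK y)^2 / y - pi^2 / 32 * (2 * y)) (at y)"
      unfolding M_def[abs_def] using y y1
      by (intro DERIV_diff DERIV_cmult ell_numerator_has_real_derivative) (auto intro!: derivative_eq_intros)
    moreover have "pi^2 / 16 * y \<le> (ellE y - ellK y)^2 / y"
    proof -
      have "(pi / 4 * y)^2 \<le> (ellK y - ellE y)^2"
        using ellK_minus_ellE_ge[of y] y y1 by (intro power_mono) auto
      then show ?thesis using y by (simp add: field_simps power2_eq_square)
    qed
    then have "0 \<le> (ellE y - ellK y)^2 / y - pi^2 / 32 * (2 * y)" by linarith
    ultimately show "\<exists>l. (M has_real_derivative l) (at y) \<and> 0 \<le> l" by blast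
  next
    show "continuous_on {0..x} M"
      unfolding M_def using assms
      by (intro continuous_at_imp_continuous_on ballI continuous_intros isCont_ellE isCont_ellK) auto
  qed
  then show ?thesis by (simp add: M_def ellE_0 ellK_0)
qed

lemma ell_quotient_ge:
  assumes "0 < x" "x < 3/5"
  shows "pi / 16 \<le> ((ellE x)^2 - (1 - x) * (ellK x)^2) / (x^2 * ellK x)"
proof -
  have "(ellK \<longlongrightarrow> pi / 2) (at_right 0)"
    using isCont_ellK[OF zero_less_one] unfolding isCont_def ellK_0
    by (rule tendsto_mono[OF at_le[OF subset_UNIV]])
  then have "((\<lambda>y. pi^2 / (32 * ellK y)) \<longlongrightarrow> pi^2 / (32 * (pi / 2))) (at_right 0)"
    by (intro tendsto_intros) auto
  moreover have "\<forall>\<^sub>F y in at_right 0.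
                   pi^2 / (32 * ellK y) \<le> ((ellE x)^2 - (1 - x) * (ellK x)^2) / (x^2 * ellK x)"
    unfolding eventually_at_right_field
  proof (intro exI[of _ x] conjI allI impI)
    fix y :: real assume y: "0 < y" "y < x"
    then have y1: "0 < y" "y < 1" using assms by auto
    have K: "0 < ellK y" using y1 by (simp add: ellK_pos)
    have "pi^2 / (32 * ellK y) = (pi^2 / 32 * y^2) / (y^2 * ellK y)"
      using y1 K by (simp add: field_simps)
    also have "\<dots> \<le> ((ellE y)^2 - (1 - y) * (ellK y)^2) / (y^2 * ellK y)"
      using ell_numerator_ge[of y] y1 K by (intro divide_right_mono) auto
    also have "\<dots> < ((ellE x)^2 - (1 - x) * (ellK x)^2) / (x^2 * ellK x)"
      using strict_mono_on_ell_quotient y assms by (auto simp: strict_mono_on_def)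
    finally show "pi^2 / (32 * ellK y) \<le> ((ellE x)^2 - (1 - x) * (ellK x)^2) / (x^2 * ellK x)"
      by simp
  qed (use assms in simp)
  ultimately have "pi^2 / (32 * (pi / 2)) \<le> ((ellE x)^2 - (1 - x) * (ellK x)^2) / (x^2 * ellK x)"
    by (intro tendsto_le[OF trivial_limit_at_right_real tendsto_const])
  then show ?thesis by (simp add: power2_eq_square)
qed

theorem mainTheorem8:
  fixes \<alpha> :: real
  defines "\<alpha> \<equiv> 8 / 97 * (11 - 2 * sqrt 6)"
  shows "strict_mono_on {0<..<\<alpha>}
           (\<lambda>x. ((ellE x)\<^sup>2 - (1 - x) * (ellK x)\<^sup>2) / (x\<^sup>2 * ellK x))
         \<and> (\<forall>x\<in>{0<..<\<alpha>}. (ellE x)\<^sup>2 - (1 - x) * (ellK x)\<^sup>2 \<ge> pi / 16 * x\<^sup>2 * ellK x)"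
proof -
  have "2 < sqrt 6" by (simp add: real_less_rsqrt)
  then have sub: "{0<..<\<alpha>} \<subseteq> {0<..<3/5}" by (auto simp: \<alpha>_def)
  have "pi / 16 * x^2 * ellK x \<le> (ellE x)^2 - (1 - x) * (ellK x)^2" if "x \<in> {0<..<\<alpha>}" for x
  proof -
    have x: "0 < x" "x < 3/5" using that sub by auto
    then have "0 < x^2 * ellK x" by (simp add: ellK_pos)
    with ell_quotient_ge[OF x] show ?thesis by (simp add: le_divide_eq mult.assoc)
  qed
  then show ?thesis
    using monotone_on_subset[OF strict_mono_on_ell_quotient sub] by blast
qed

end
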